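(* Let $F$ be a field. Every Hurwitz $F$-algebra whose norm is anisotropic is reversible. A split Hurwitz $F$-algebra (i.e. one whose norm is isotropic) is reversible if and only if its dimension is at most $2$.
   Context: An $F$-algebra is a vector space with a bilinear (not necessarily associative) multiplication; all algebras are unital. For a quadratic form $q:V\to F$, let $\langle x,y\rangle=q(x+y)-q(x)-q(y)$ and $V^\perp=\{x\in V:\langle x,V\rangle=0\}$; $q$ is non-degenerate if either $V^\perp=0$, or $\dim V^\perp=1$ and $q(V^\perp)\neq 0$. $q$ is anisotropic if $q(x)\ne 0$ for all nonzero $x$, isotropic otherwise. A Hurwitz algebra is a unital $F$-algebra $A$ with a non-degenerate quadratic form $n:A\to F$ (its norm) satisfying $n(ab)=n(a)n(b)$ for all $a,b\in A$; it is split if $n$ is isotropic. An algebra $A$ is reversible if $ab=0$ implies $ba=0$ for all $a,b\in A$. *)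

theory Defs
  imports Complex_Main
begin

definition is_algebra :: "('f::field \<Rightarrow> 'a::ab_group_add \<Rightarrow> 'a) \<Rightarrow> ('a \<Rightarrow> 'a \<Rightarrow> 'a) \<Rightarrow> bool" where
  "is_algebra scale mult \<longleftrightarrow>
     vector_space scale \<and>
     (\<forall>x y z. mult (x + y) z = mult x z + mult y z) \<and>
     (\<forall>x y z. mult x (y + z) = mult x y + mult x z) \<and>
     (\<forall>c x y. mult (scale c x) y = scale c (mult x y)) \<and>
     (\<forall>c x y. mult x (scale c y) = scale c (mult x y))"

definition unital :: "('a \<Rightarrow> 'a \<Rightarrow> 'a) \<Rightarrow> bool" where
  "unital mult \<longleftrightarrow> (\<exists>e. \<forall>x. mult e x = x \<and> mult x e = x)"

definition polar :: "('a::ab_group_add \<Rightarrow> 'f::field) \<Rightarrow> 'a \<Rightarrow> 'a \<Rightarrow> 'f" where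
  "polar q x y = q (x + y) - q x - q y"

definition quadratic_form :: "('f::field \<Rightarrow> 'a::ab_group_add \<Rightarrow> 'a) \<Rightarrow> ('a \<Rightarrow> 'f) \<Rightarrow> bool" where
  "quadratic_form scale q \<longleftrightarrow>
     (\<forall>c x. q (scale c x) = c ^ 2 * q x) \<and>
     (\<forall>x y z. polar q (x + y) z = polar q x z + polar q y z) \<and>
     (\<forall>c x y. polar q (scale c x) y = c * polar q x y)"

definition radical :: "('a::ab_group_add \<Rightarrow> 'f::field) \<Rightarrow> 'a set" where
  "radical q = {x. \<forall>y. polar q x y = 0}"

definition nondegenerate :: "('f::field \<Rightarrow> 'a::ab_group_add \<Rightarrow> 'a) \<Rightarrow> ('a \<Rightarrow> 'f) \<Rightarrow> bool" where
  "nondegenerate scale q \<longleftrightarrow>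
     radical q = {0} \<or>
     (vector_space.dim scale (radical q) = 1 \<and> (\<exists>x\<in>radical q. q x \<noteq> 0))"

definition anisotropic :: "('a::ab_group_add \<Rightarrow> 'f::field) \<Rightarrow> bool" where
  "anisotropic q \<longleftrightarrow> (\<forall>x. x \<noteq> 0 \<longrightarrow> q x \<noteq> 0)"

definition hurwitz_algebra ::
  "('f::field \<Rightarrow> 'a::ab_group_add \<Rightarrow> 'a) \<Rightarrow> ('a \<Rightarrow> 'a \<Rightarrow> 'a) \<Rightarrow> ('a \<Rightarrow> 'f) \<Rightarrow> bool" where
  "hurwitz_algebra scale mult n \<longleftrightarrow>
     is_algebra scale mult \<and> unital mult \<and>
     quadratic_form scale n \<and> nondegenerate scale n \<and>
     (\<forall>a b. n (mult a b) = n a * n b)"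

definition reversible :: "('a::zero \<Rightarrow> 'a \<Rightarrow> 'a) \<Rightarrow> bool" where
  "reversible mult \<longleftrightarrow> (\<forall>a b. mult a b = 0 \<longrightarrow> mult b a = 0)"

definition finite_dim :: "('f::field \<Rightarrow> 'a::ab_group_add \<Rightarrow> 'a) \<Rightarrow> bool" where
  "finite_dim scale \<longleftrightarrow> (\<exists>B. finite B \<and> module.span scale B = UNIV)"

end

theory Submission
  imports Defs
begin

text \<open>
  If \<open>n\<close> is anisotropic, \<open>n(ab) = n(a)n(b)\<close> rules out zero divisors. Otherwise let
  \<open>u \<noteq> 0\<close> be isotropic and write \<open>t(x) = \<langle>x,1\<rangle>\<close> and \<open>x* = t(x)1 - x\<close>. Then
  \<open>u*(u z) = 0\<close> for all \<open>z\<close>, so in a reversible algebra \<open>(u z)u* = 0\<close>; together with the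
  linearised multiplicativity of the norm and nondegeneracy this forces \<open>w u \<in> F u\<close> and
  \<open>w u* \<in> F u*\<close> for all \<open>w\<close>, as well as \<open>t(u) \<noteq> 0\<close>. Since \<open>y u + y u* = t(u) y\<close>, the
  algebra is spanned by \<open>u\<close> and \<open>u*\<close>. Conversely, a unital algebra of dimension at most 2 is
  spanned by \<open>1\<close> and one further element, hence commutative, hence reversible.
\<close>

lemma (in vector_space) card_le_dim_UNIV_if_finite_span:
  assumes "finite W" "span W = UNIV" "independent B"
  shows "card B \<le> dim UNIV"
proof -
  obtain A where A: "independent A" "UNIV \<subseteq> span A" "card A = dim UNIV"
    by (rule basis_exists[of UNIV]) auto
  have "finite A"
    using independent_span_bound[OF assms(1) A(1)] assms(2) by simp
  then show ?thesis
    using independent_span_bound[OF \<open>finite A\<close> assms(3)] A by auto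
qed

lemma nondegenerate_radical_isotropic_eq_0:
  fixes scale :: "'f::field \<Rightarrow> 'a::ab_group_add \<Rightarrow> 'a"
  assumes "vector_space scale" "quadratic_form scale n" "nondegenerate scale n"
    and "w \<in> radical n" "n w = 0"
  shows "w = 0"
proof (rule ccontr)
  interpret vector_space scale by fact
  have n_scale: "n (scale c x) = c\<^sup>2 * n x" for c x
    using assms(2) by (simp add: quadratic_form_def)
  assume "w \<noteq> 0"
  with assms(3,4) obtain r where dim_1: "dim (radical n) = 1" and "r \<in> radical n" "n r \<noteq> 0"
    by (auto simp: nondegenerate_def)
  obtain A where "radical n \<subseteq> span A" "card A = 1"
    using basis_exists[of "radical n"] dim_1 by metis
  then obtain b where "radical n \<subseteq> span {b}"
    by (metis card_1_singletonE)
  then obtain k l where w: "w = scale k b" and r: "r = scale l b"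
    using \<open>w \<in> radical n\<close> \<open>r \<in> radical n\<close> unfolding span_singleton by blast
  have "k \<noteq> 0" using \<open>w \<noteq> 0\<close> w by auto
  then have "n b = 0" using \<open>n w = 0\<close> by (simp add: w n_scale)
  then show False using \<open>n r \<noteq> 0\<close> by (simp add: r n_scale)
qed

locale unital_algebra = vector_space scale
  for scale :: "'f::field \<Rightarrow> 'a::ab_group_add \<Rightarrow> 'a" (infixr "*s" 75) +
  fixes mult :: "'a \<Rightarrow> 'a \<Rightarrow> 'a" (infixl "\<star>" 70)
    and e :: 'a
  assumes is_algebra: "is_algebra scale mult"
    and mult_unit_left: "e \<star> x = x"
    and mult_unit_right: "x \<star> e = x"
begin

lemma mult_add_left: "(x + y) \<star> z = x \<star> z + y \<star> z"
  and mult_add_right: "x \<star> (y + z) = x \<star> y + x \<star> z"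
  and mult_scale_left: "(c *s x) \<star> y = c *s (x \<star> y)"
  and mult_scale_right: "x \<star> (c *s y) = c *s (x \<star> y)"
  using is_algebra by (simp_all add: is_algebra_def)

lemma mult_zero_left [simp]: "0 \<star> z = 0"
  using mult_add_left[of 0 0 z] by simp

lemma mult_zero_right [simp]: "z \<star> 0 = 0"
  using mult_add_right[of z 0 0] by simp

lemma mult_diff_left: "(x - y) \<star> z = x \<star> z - y \<star> z"
  using mult_add_left[of "x - y" y z] by (simp add: algebra_simps)

lemma mult_diff_right: "z \<star> (x - y) = z \<star> x - z \<star> y"
  using mult_add_right[of z "x - y" y] by (simp add: algebra_simps)

lemma mult_commute_if_dim_le_2:
  assumes "finite_dim scale" "dim (UNIV :: 'a set) \<le> 2"
  shows "x \<star> y = y \<star> x"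
proof (cases "x \<in> span {e}")
  case True
  then obtain k where "x = k *s e" by (auto simp: span_singleton)
  then show ?thesis by (simp add: mult_scale_left mult_scale_right mult_unit_left mult_unit_right)
next
  case False
  obtain W where W: "finite W" "span W = UNIV"
    using assms(1) by (auto simp: finite_dim_def)
  have "e \<noteq> 0"
    using False mult_unit_right[of x] by auto
  then have indep: "independent {x, e}"
    using False by (auto simp: independent_insert)
  have "y \<in> span {x, e}"
  proof (rule ccontr)
    assume "y \<notin> span {x, e}"
    moreover have "x \<noteq> e" "y \<noteq> x" "y \<noteq> e"
      using False \<open>y \<notin> span {x, e}\<close> span_base[of _ "{x, e}"] span_base[of e "{e}"] by auto
    ultimately have "independent {y, x, e}" "card {y, x, e} = 3"
      using indep by (auto simp: independent_insert)
    then show False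
      using card_le_dim_UNIV_if_finite_span[OF W] assms(2) by fastforce
  qed
  then obtain a b where "y = a *s x + b *s e"
    by (auto simp: span_breakdown_eq span_singleton algebra_simps)
  then show ?thesis
    by (simp add: mult_add_left mult_add_right mult_scale_left mult_scale_right
        mult_unit_left mult_unit_right)
qed

end

locale composition_algebra = unital_algebra scale mult e
  for scale :: "'f::field \<Rightarrow> 'a::ab_group_add \<Rightarrow> 'a" (infixr "*s" 75)
    and mult :: "'a \<Rightarrow> 'a \<Rightarrow> 'a" (infixl "\<star>" 70)
    and e :: 'a +
  fixes n :: "'a \<Rightarrow> 'f"
  assumes quadratic: "quadratic_form scale n"
    and norm_mult: "n (x \<star> y) = n x * n y"
    and radical_isotropic_eq_0: "(\<And>y. polar n w y = 0) \<Longrightarrow> n w = 0 \<Longrightarrow> w = 0"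
begin

lemma norm_scale: "n (c *s x) = c\<^sup>2 * n x"
  and polar_add_left: "polar n (x + y) z = polar n x z + polar n y z"
  and polar_scale_left: "polar n (c *s x) y = c * polar n x y"
  using quadratic by (simp_all add: quadratic_form_def)

lemma polar_commute: "polar n x y = polar n y x"
  by (simp add: polar_def algebra_simps)

lemma polar_add_right: "polar n z (x + y) = polar n z x + polar n z y"
  by (simp add: polar_commute[of z] polar_add_left)

lemma polar_scale_right: "polar n y (c *s x) = c * polar n y x"
  by (simp add: polar_commute[of y] polar_scale_left)

lemma norm_zero [simp]: "n 0 = 0"
  using norm_scale[of 0 0] by simp

lemma polar_diff_left: "polar n (x - y) z = polar n x z - polar n y z"
  using polar_add_left[of "x - y" y z] by simp

lemma polar_diff_right: "polar n z (x - y) = polar n z x - polar n z y"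
  by (simp add: polar_commute[of z] polar_diff_left)

lemma norm_add: "n (x + y) = n x + n y + polar n x y"
  by (simp add: polar_def)

lemma norm_minus: "n (- x) = n x"
  using norm_scale[of "- 1" x] by simp

lemma polar_zero_left [simp]: "polar n 0 y = 0"
  by (simp add: polar_def)

lemma polar_minus_right: "polar n y (- x) = - polar n y x"
  using polar_scale_right[of y "- 1" x] by simp

lemma polar_self: "polar n x x = 2 * n x"
  using norm_scale[of 2 x] by (simp add: norm_add scale_left_distrib[of 1 1, simplified])

lemma reversible_if_anisotropic:
  assumes "anisotropic n"
  shows "reversible (\<star>)"
  unfolding reversible_def
proof (intro allI impI)
  fix a b
  assume "a \<star> b = 0"
  then have "n a * n b = 0" by (metis norm_mult norm_zero)
  then have "a = 0 \<or> b = 0" using assms by (auto simp: anisotropic_def)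
  then show "b \<star> a = 0" by auto
qed

lemma polar_mult_left: "polar n (x \<star> y) (x \<star> z) = n x * polar n y z"
  using norm_mult[of x "y + z"] by (simp add: mult_add_right norm_add norm_mult algebra_simps)

lemma polar_mult_right: "polar n (y \<star> x) (z \<star> x) = polar n y z * n x"
  using norm_mult[of "y + z" x] by (simp add: mult_add_left norm_add norm_mult algebra_simps)

lemma polar_mult_left_polarized:
  "polar n (x \<star> y) (w \<star> z) + polar n (w \<star> y) (x \<star> z) = polar n x w * polar n y z"
proof -
  have "(n x + n w + polar n x w) * polar n y z = polar n ((x + w) \<star> y) ((x + w) \<star> z)"
    by (simp add: polar_mult_left norm_add)
  also have "\<dots> = polar n (x \<star> y) (x \<star> z) + polar n (x \<star> y) (w \<star> z)
      + polar n (w \<star> y) (x \<star> z) + polar n (w \<star> y) (w \<star> z)"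
    by (simp add: mult_add_left polar_add_left polar_add_right ac_simps)
  finally show ?thesis
    by (simp add: polar_mult_left algebra_simps)
qed

lemma polar_mult_right_polarized:
  "polar n (y \<star> x) (z \<star> w) + polar n (y \<star> w) (z \<star> x) = polar n y z * polar n x w"
proof -
  have "polar n y z * (n x + n w + polar n x w) = polar n (y \<star> (x + w)) (z \<star> (x + w))"
    by (simp add: polar_mult_right norm_add)
  also have "\<dots> = polar n (y \<star> x) (z \<star> x) + polar n (y \<star> x) (z \<star> w)
      + polar n (y \<star> w) (z \<star> x) + polar n (y \<star> w) (z \<star> w)"
    by (simp add: mult_add_right polar_add_left polar_add_right ac_simps)
  finally show ?thesis
    by (simp add: polar_mult_right algebra_simps)
qed

lemma norm_unit_cases: "n e = 1 \<or> (\<forall>x::'a. x = 0)"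
proof (cases "n e = 0")
  case True
  then have norm_0: "n x = 0" for x
    using norm_mult[of e x] mult_unit_left by simp
  have "x = 0" for x :: 'a
    by (rule radical_isotropic_eq_0) (simp_all add: polar_def norm_0)
  then show ?thesis
    by blast
next
  case False
  then show ?thesis
    using norm_mult[of e e] mult_unit_left[of e] by simp
qed

definition trace where
  "trace x = polar n x e"

definition cnj where
  "cnj x = trace x *s e - x"

lemma cnj_mult_left: "cnj x \<star> y = trace x *s y - x \<star> y"
  by (simp add: cnj_def mult_diff_left mult_scale_left mult_unit_left)

lemma cnj_mult_right: "y \<star> cnj x = trace x *s y - y \<star> x"
  by (simp add: cnj_def mult_diff_right mult_scale_right mult_unit_right)

lemma polar_mult_left_adjoint: "polar n (x \<star> a) b = polar n a (cnj x \<star> b)"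
  using polar_mult_left_polarized[of x a e b]
  by (simp add: mult_unit_left cnj_mult_left polar_diff_right polar_scale_right trace_def
      algebra_simps)

lemma polar_mult_right_adjoint: "polar n (a \<star> x) b = polar n a (b \<star> cnj x)"
  using polar_mult_right_polarized[of a x b e]
  by (simp add: mult_unit_right cnj_mult_right polar_diff_right polar_scale_right trace_def
      algebra_simps)

lemma norm_cnj: "n (cnj x) = n x"
proof (cases "n e = 1")
  case True
  have "n (cnj x) = n (trace x *s e) + n (- x) + polar n (trace x *s e) (- x)"
    unfolding cnj_def diff_conv_add_uminus by (rule norm_add)
  also have "\<dots> = n x"
    using True by (simp add: norm_scale norm_minus polar_scale_left polar_minus_right
        polar_commute[of e x] trace_def power2_eq_square)
  finally show ?thesis .
next
  case False
  then show ?thesis using norm_unit_cases by metis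
qed

lemma trace_cnj: "trace (cnj x) = trace x"
proof (cases "n e = 1")
  case True
  then show ?thesis by (simp add: trace_def cnj_def polar_diff_left polar_scale_left polar_self)
next
  case False
  then show ?thesis using norm_unit_cases by metis
qed

lemma cnj_cnj [simp]: "cnj (cnj x) = x"
  using trace_cnj[of x] by (simp add: cnj_def[of "cnj x"]) (simp add: cnj_def)

lemma isotropic_square:
  assumes "n s = 0"
  shows "s \<star> s = trace s *s s"
proof -
  define d where "d = s \<star> s - trace s *s s"
  have "polar n d w = 0" for w
  proof -
    have "polar n (s \<star> s) w + polar n s (s \<star> w) = trace s * polar n s w"
      using polar_mult_left_polarized[of s s e w] by (simp add: mult_unit_left trace_def)
    moreover have "polar n s (s \<star> w) = 0"
      using polar_mult_left[of s e w] assms by (simp add: mult_unit_right)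
    ultimately show ?thesis by (simp add: d_def polar_diff_left polar_scale_left)
  qed
  moreover have "n d = 0"
  proof -
    have "d = s \<star> (s - trace s *s e)"
      by (simp add: d_def mult_diff_right mult_scale_right mult_unit_right)
    then show ?thesis by (simp add: norm_mult assms)
  qed
  ultimately have "d = 0"
    by (rule radical_isotropic_eq_0)
  then show ?thesis
    by (simp add: d_def)
qed

lemma isotropic_mult_cnj_mult:
  assumes "n u = 0"
  shows "u \<star> (cnj u \<star> z) = 0"
proof (rule radical_isotropic_eq_0)
  show "polar n (u \<star> (cnj u \<star> z)) w = 0" for w
    unfolding polar_mult_left_adjoint[of u] using assms by (simp add: polar_mult_left norm_cnj)
  show "n (u \<star> (cnj u \<star> z)) = 0"
    using assms by (simp add: norm_mult)
qed

lemma isotropic_scale_eq_cnj_mult: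
  assumes "reversible (\<star>)" and "n s = 0"
  shows "polar n s w *s s = trace s *s (cnj w \<star> s)"
proof -
  have "cnj s \<star> (s \<star> z) = 0" for z
    using isotropic_mult_cnj_mult[of "cnj s"] assms(2) by (simp add: norm_cnj)
  then have "(s \<star> z) \<star> cnj s = 0" for z
    using assms(1) by (simp add: reversible_def)
  then have orth: "polar n (s \<star> z) (w \<star> s) = 0" for z
    using polar_mult_right_adjoint[of "s \<star> z" "cnj s" w] by simp
  define d where "d = polar n s w *s s - trace s *s (cnj w \<star> s)"
  have "polar n d z = 0" for z
  proof -
    have "polar n (s \<star> z) (w \<star> s) + polar n (w \<star> z) (s \<star> s) = polar n s w * polar n z s"
      by (rule polar_mult_left_polarized)
    moreover have "polar n (w \<star> z) (s \<star> s) = trace s * polar n z (cnj w \<star> s)"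
      using assms(2) by (simp add: polar_mult_left_adjoint isotropic_square polar_scale_right)
    ultimately show ?thesis
      using orth[of z] by (simp add: d_def polar_diff_left polar_scale_left polar_commute[of z])
  qed
  moreover have "n d = 0"
  proof -
    have "d = (polar n s w *s e - trace s *s cnj w) \<star> s"
      by (simp add: d_def mult_diff_left mult_scale_left mult_unit_left)
    then show ?thesis by (simp add: norm_mult assms(2))
  qed
  ultimately have "d = 0"
    by (rule radical_isotropic_eq_0)
  then show ?thesis
    by (simp add: d_def)
qed

lemma isotropic_trace_nonzero:
  assumes "reversible (\<star>)" and "n u = 0" and "u \<noteq> 0"
  shows "trace u \<noteq> 0"
proof
  assume "trace u = 0"
  then have "polar n u w *s u = 0" for w
    using isotropic_scale_eq_cnj_mult[OF assms(1,2)] by simp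
  then have "polar n u w = 0" for w
    using \<open>u \<noteq> 0\<close> by simp
  then show False
    using radical_isotropic_eq_0 assms(2,3) by blast
qed

lemma mult_isotropic_in_span:
  assumes "reversible (\<star>)" and "n s = 0"
  shows "y \<star> s \<in> span {s}"
proof (cases "s = 0")
  case False
  then have "trace s \<noteq> 0"
    using isotropic_trace_nonzero assms by blast
  moreover have "polar n s (cnj y) *s s = trace s *s (y \<star> s)"
    using isotropic_scale_eq_cnj_mult[OF assms, of "cnj y"] by simp
  ultimately have "y \<star> s = (polar n s (cnj y) / trace s) *s s"
    by (metis divide_inverse mult.commute scale_scale right_inverse scale_one)
  then show ?thesis
    by (metis span_base span_scale singletonI)
qed simp

lemma span_isotropic_cnj:
  assumes "reversible (\<star>)" and "n u = 0" and "u \<noteq> 0"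
  shows "span {u, cnj u} = UNIV"
proof -
  have "y \<in> span {u, cnj u}" for y
  proof -
    have "span {u} \<subseteq> span {u, cnj u}" "span {cnj u} \<subseteq> span {u, cnj u}"
      by (simp_all add: span_mono)
    moreover have "y \<star> u \<in> span {u}" "y \<star> cnj u \<in> span {cnj u}"
      using mult_isotropic_in_span[OF assms(1)] assms(2) by (simp_all add: norm_cnj)
    moreover have "y \<star> u + y \<star> cnj u = trace u *s y"
      by (simp add: cnj_mult_right)
    then have "y = inverse (trace u) *s (y \<star> u + y \<star> cnj u)"
      using isotropic_trace_nonzero[OF assms] by simp
    ultimately show ?thesis
      by (metis span_add span_scale subsetD)
  qed
  then show ?thesis
    by blast
qed

lemma reversible_iff_dim_le_2:
  assumes "u \<noteq> 0" and "n u = 0"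
  shows "reversible (\<star>) \<longleftrightarrow> finite_dim scale \<and> dim (UNIV :: 'a set) \<le> 2"
proof
  assume "reversible (\<star>)"
  then have span: "span {u, cnj u} = UNIV"
    using span_isotropic_cnj assms by blast
  then have "dim (UNIV :: 'a set) \<le> card {u, cnj u}"
    by (intro dim_le_card) auto
  also have "\<dots> \<le> 2"
    by (simp add: card_insert_if)
  moreover have "finite_dim scale"
    unfolding finite_dim_def using span by (intro exI[of _ "{u, cnj u}"]) simp
  ultimately show "finite_dim scale \<and> dim (UNIV :: 'a set) \<le> 2"
    by simp
next
  assume "finite_dim scale \<and> dim (UNIV :: 'a set) \<le> 2"
  then show "reversible (\<star>)"
    using mult_commute_if_dim_le_2 by (simp add: reversible_def)
qed

end

lemma composition_algebra_if_hurwitz_algebra: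
  assumes "hurwitz_algebra scale mult n"
  obtains e where "composition_algebra scale mult e n"
proof -
  obtain e where unit: "mult e x = x" "mult x e = x" for x
    using assms by (auto simp: hurwitz_algebra_def unital_def)
  have "vector_space scale" and "quadratic_form scale n" and "nondegenerate scale n"
    using assms by (simp_all add: hurwitz_algebra_def is_algebra_def)
  then have "w = 0" if "\<And>y. polar n w y = 0" "n w = 0" for w
    using nondegenerate_radical_isotropic_eq_0 that by (auto simp: radical_def)
  then have "composition_algebra scale mult e n"
    using assms \<open>vector_space scale\<close> unit
    by (unfold_locales) (auto simp: hurwitz_algebra_def vector_space_def)
  then show thesis
    by (rule that)
qed

theorem proposition4p2:
  fixes scale :: "'f::field \<Rightarrow> 'a::ab_group_add \<Rightarrow> 'a"
    and mult :: "'a \<Rightarrow> 'a \<Rightarrow> 'a"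
    and n :: "'a \<Rightarrow> 'f"
  assumes "hurwitz_algebra scale mult n"
  shows "(anisotropic n \<longrightarrow> reversible mult) \<and>
         (\<not> anisotropic n \<longrightarrow>
            (reversible mult \<longleftrightarrow> finite_dim scale \<and> vector_space.dim scale (UNIV :: 'a set) \<le> 2))"
proof -
  obtain e where "composition_algebra scale mult e n"
    using composition_algebra_if_hurwitz_algebra assms by blast
  then interpret composition_algebra scale mult e n .
  show ?thesis
    using reversible_if_anisotropic reversible_iff_dim_le_2 by (auto simp: anisotropic_def)
qed

end
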